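(* Let $r \ge 0$ be a fixed integer. There is a constant $C>0$ (depending only on $r$) such that for every $r$-rank connected graph $G$ with vertex set $V=[n]$, there exists a hypergraph $H$ on $[n]$ with at most $C n^{r+1}$ hyperedges (i.e. $\mathcal O(n^{r+1})$ hyperedges) such that $\mathrm{cl}_r(H) = H_r(G)$.
   Context: For a graph $G=(V,E)$ and $X\subseteq V$, write $\overline X = V\setminus X$. The cut-rank $\rho(X)$ is the rank over the two-element field $\mathbb{F}_2$ of the submatrix of the adjacency matrix of $G$ with rows indexed by $X$ and columns indexed by $\overline X$. A set $X\subseteq V$ (identified with the cut $(X,\overline X)$) is a $k$-split if $\rho(X)\le k$; it is trivial if $\rho(X)=\min(|X|,|\overline X|)$. $G$ is $r$-rank connected if every $k$-split with $k<r$ is trivial. $H_r(G)$ is the hypergraph with vertex set $[n]$ whose hyperedges are all $r$-splits of $G$. A hypergraph on $[n]$ is identified with its set of hyperedges (subsets of $[n]$). $\mathcal K_r(n)$ is the class of hypergraphs $\mathcal E$ on $V=[n]$ such that: (R0) every $X\subseteq V$ with $|X|\le r$ is in $\mathcal E$; (R1) if $A\in\mathcal E$ then $V\setminus A\in\mathcal E$; (R2) if $A,B\in\mathcal E$ and $|A\cap B|\ge r$ then $A\cup B\in\mathcal E$. For a hypergraph $H$ on $[n]$, $\mathrm{cl}_r(H)$ is the intersection of all hypergraphs in $\mathcal K_r(n)$ containing $H$. *)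

theory Defs
  imports Complex_Main
begin

text \<open>Vertex set [n] = {1..n}. A simple graph on [n] is a symmetric irreflexive
  relation E (only its restriction to [n] matters).\<close>

definition is_graph :: "nat \<Rightarrow> (nat \<Rightarrow> nat \<Rightarrow> bool) \<Rightarrow> bool" where
  "is_graph n E \<longleftrightarrow> (\<forall>u\<in>{1..n}. \<forall>v\<in>{1..n}. E u v = E v u) \<and> (\<forall>v\<in>{1..n}. \<not> E v v)"

text \<open>A set S of rows (vertices) is linearly independent over GF(2) in the submatrix
  with columns Y: no nonempty subset T of S has zero sum, i.e. for every nonempty
  T \<subseteq> S some column u \<in> Y has an odd number of ones among the rows in T.\<close>

definition gf2_indep :: "(nat \<Rightarrow> nat \<Rightarrow> bool) \<Rightarrow> nat set \<Rightarrow> nat set \<Rightarrow> bool" where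
  "gf2_indep E Y S \<longleftrightarrow>
     (\<forall>T\<subseteq>S. T \<noteq> {} \<longrightarrow> (\<exists>u\<in>Y. odd (card {v\<in>T. E v u})))"

definition gf2_rank :: "(nat \<Rightarrow> nat \<Rightarrow> bool) \<Rightarrow> nat set \<Rightarrow> nat set \<Rightarrow> nat" where
  "gf2_rank E X Y = Max {card S | S. S \<subseteq> X \<and> gf2_indep E Y S}"

definition cut_rank :: "nat \<Rightarrow> (nat \<Rightarrow> nat \<Rightarrow> bool) \<Rightarrow> nat set \<Rightarrow> nat" where
  "cut_rank n E X = gf2_rank E X ({1..n} - X)"

definition trivial_split :: "nat \<Rightarrow> (nat \<Rightarrow> nat \<Rightarrow> bool) \<Rightarrow> nat set \<Rightarrow> bool" where
  "trivial_split n E X \<longleftrightarrow> cut_rank n E X = min (card X) (card ({1..n} - X))"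

definition rank_connected :: "nat \<Rightarrow> nat \<Rightarrow> (nat \<Rightarrow> nat \<Rightarrow> bool) \<Rightarrow> bool" where
  "rank_connected r n E \<longleftrightarrow>
     (\<forall>X\<subseteq>{1..n}. \<forall>k<r. cut_rank n E X \<le> k \<longrightarrow> trivial_split n E X)"

definition splits_hypergraph :: "nat \<Rightarrow> nat \<Rightarrow> (nat \<Rightarrow> nat \<Rightarrow> bool) \<Rightarrow> nat set set" where
  "splits_hypergraph r n E = {X. X \<subseteq> {1..n} \<and> cut_rank n E X \<le> r}"

definition K_class :: "nat \<Rightarrow> nat \<Rightarrow> nat set set set" where
  "K_class r n = {\<E>. \<E> \<subseteq> Pow {1..n} \<and>
      (\<forall>X\<subseteq>{1..n}. card X \<le> r \<longrightarrow> X \<in> \<E>) \<and>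
      (\<forall>A\<in>\<E>. {1..n} - A \<in> \<E>) \<and>
      (\<forall>A\<in>\<E>. \<forall>B\<in>\<E>. card (A \<inter> B) \<ge> r \<longrightarrow> A \<union> B \<in> \<E>)}"

definition cl :: "nat \<Rightarrow> nat \<Rightarrow> nat set set \<Rightarrow> nat set set" where
  "cl r n H = \<Inter> {\<E> \<in> K_class r n. H \<subseteq> \<E>}"

end

theory Submission
  imports Defs "HOL-Library.Z2" "HOL-Library.Function_Algebras"
begin

text \<open>
  First, the hypergraph H_r(G) of r-splits already lies in K_r(n). Axiom (R0) holds
  because the cut-rank of X is at most |X|, and (R1) because the cut-rank is symmetric
  (row rank equals column rank). For (R2) we use submodularity,
  rho(A \<union> B) + rho(A \<inter> B) \<le> rho(A) + rho(B): if rho(A \<inter> B) \<ge> r this bounds rho(A \<union> B) by r;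
  otherwise A \<inter> B is a trivial split by r-rank connectivity, and as |A \<inter> B| \<ge> r > rho(A \<inter> B)
  we get rho(A \<union> B) \<le> |V - (A \<union> B)| \<le> |V - (A \<inter> B)| = rho(A \<inter> B) < r.

  Second, every F in K_r(n) is the closure of its members X with 2|X| \<le> n that are the
  minimal member of F containing some (r+1)-set R. Such an R determines X: two candidates
  X1, X2 have complements meeting in at least r points, so by (R1) and (R2) also
  X1 \<inter> X2 \<in> F, and it contains R. Hence there are at most (n choose r+1) \<le> n^(r+1)
  generators. Every other member X of F is small (R0), the complement of a smaller member
  (R1), or, for an r-subset S of X, the union of smaller members of F containing S (R2);
  so induction on |X| puts X into every member of K_r(n) that contains the generators.
\<close>

section \<open>The cut-rank as a dimension over GF(2)\<close>

(* HOL-Library.Z2 rewrites + and * on bit to XOR and AND; we keep the field operations. *)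
declare add_bit_eq_xor [simp del] mult_bit_eq_and [simp del]

definition gf2_scale :: "bit \<Rightarrow> (nat \<Rightarrow> bit) \<Rightarrow> nat \<Rightarrow> bit" where
  "gf2_scale c f = (\<lambda>x. c * f x)"

interpretation gf2: vector_space gf2_scale
  by unfold_locales
    (auto simp: gf2_scale_def fun_eq_iff distrib_left distrib_right mult.assoc)

lemma gf2_scale_apply [simp]: "gf2_scale c f x = c * f x"
  by (simp add: gf2_scale_def)

lemma sum_apply: "(\<Sum>x\<in>S. f x) u = (\<Sum>x\<in>S. f x u)"
  for f :: "'a \<Rightarrow> 'b \<Rightarrow> 'c::comm_monoid_add"
  by (induction S rule: infinite_finite_induct) simp_all

lemma of_nat_bit: "(of_nat n :: bit) = of_bool (odd n)"
  by (induction n) (auto simp: add_bit_eq_xor)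

lemma gf2_independent_image_if_nonzero_sums:
  assumes inj: "inj_on f S" and nz: "\<And>T. T \<subseteq> S \<Longrightarrow> T \<noteq> {} \<Longrightarrow> sum f T \<noteq> 0"
  shows "gf2.independent (f ` S)"
  unfolding gf2.independent_explicit_module
proof (intro allI impI, rule ccontr)
  fix t c w
  assume t: "finite t" "t \<subseteq> f ` S" and s: "(\<Sum>v\<in>t. gf2_scale (c v) v) = 0"
    and w: "w \<in> t" "c w \<noteq> 0"
  define T where "T = {v \<in> S. f v \<in> t \<and> c (f v) = 1}"
  have "f ` T = {x \<in> t. c x = 1}" using t(2) unfolding T_def by auto
  then have "sum f T = (\<Sum>x\<in>{x \<in> t. c x = 1}. x)"
    using sum.reindex[OF inj_on_subset[OF inj], of T id] unfolding T_def by auto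
  also have "\<dots> = (\<Sum>v\<in>t. gf2_scale (c v) v)"
    unfolding sum.inter_filter[OF t(1)] by (rule sum.cong) auto
  finally have "sum f T = 0" using s by simp
  moreover have "T \<noteq> {}" using t(2) w unfolding T_def by auto
  moreover have "T \<subseteq> S" unfolding T_def by blast
  ultimately show False using nz by blast
qed

lemma gf2_independent_image_iff:
  assumes "finite S"
  shows "(\<forall>T\<subseteq>S. T \<noteq> {} \<longrightarrow> sum f T \<noteq> 0) \<longleftrightarrow> inj_on f S \<and> gf2.independent (f ` S)"
proof
  assume nz: "\<forall>T\<subseteq>S. T \<noteq> {} \<longrightarrow> sum f T \<noteq> 0"
  have "inj_on f S"
  proof (rule inj_onI, rule ccontr)
    fix a b assume ab: "a \<in> S" "b \<in> S" "f a = f b" "a \<noteq> b"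
    then have "sum f {a, b} = f a + f a" by simp
    also have "\<dots> = 0" by (simp add: fun_eq_iff add_bit_eq_xor)
    finally have "sum f {a, b} = 0" .
    moreover have "{a, b} \<subseteq> S" using ab(1,2) by simp
    ultimately show False using nz by blast
  qed
  moreover have "gf2.independent (f ` S)"
    using gf2_independent_image_if_nonzero_sums[OF \<open>inj_on f S\<close>] nz by blast
  ultimately show "inj_on f S \<and> gf2.independent (f ` S)" ..
next
  assume "inj_on f S \<and> gf2.independent (f ` S)"
  then have inj: "inj_on f S" and ind: "gf2.independent (f ` S)" by auto
  show "\<forall>T\<subseteq>S. T \<noteq> {} \<longrightarrow> sum f T \<noteq> 0"
  proof (intro allI impI notI)
    fix T assume T: "T \<subseteq> S" "T \<noteq> {}" and "sum f T = 0"
    then have "(\<Sum>w\<in>f ` T. gf2_scale 1 w) = 0"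
      using sum.reindex[OF inj_on_subset[OF inj T(1)], of id] by simp
    moreover obtain v where "v \<in> T" using T(2) by blast
    ultimately have "(1::bit) = 0"
      using gf2.independentD[OF ind, of "f ` T" "\<lambda>_. 1"] T(1) assms
      by (meson finite_imageI finite_subset image_eqI image_mono)
    then show False by simp
  qed
qed

lemma gf2_dim_subset:
  assumes "finite T" "S \<subseteq> T"
  shows "gf2.dim S \<le> gf2.dim T"
proof -
  obtain B where B: "B \<subseteq> T" "T \<subseteq> gf2.span B" "card B = gf2.dim T"
    by (meson gf2.basis_exists)
  have "finite B" using B(1) assms(1) by (rule finite_subset)
  then show ?thesis
    using gf2.dim_le_card[of S B] B(2,3) assms(2) by simp
qed

definition adj_row :: "(nat \<Rightarrow> nat \<Rightarrow> bool) \<Rightarrow> nat set \<Rightarrow> nat \<Rightarrow> nat \<Rightarrow> bit" where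
  "adj_row E Y v = (\<lambda>u. of_bool (u \<in> Y \<and> E v u))"

lemma sum_adj_row_eq_0_iff:
  assumes "finite T"
  shows "sum (adj_row E Y) T = 0 \<longleftrightarrow> (\<forall>u\<in>Y. even (card {v\<in>T. E v u}))"
proof -
  have "sum (adj_row E Y) T u = of_bool (u \<in> Y \<and> odd (card {v\<in>T. E v u}))" for u
    using assms by (cases "u \<in> Y") (simp_all add: adj_row_def sum_apply of_nat_bit Int_def)
  then show ?thesis by (auto simp: fun_eq_iff)
qed

lemma gf2_indep_iff:
  assumes "finite S"
  shows "gf2_indep E Y S \<longleftrightarrow> inj_on (adj_row E Y) S \<and> gf2.independent (adj_row E Y ` S)"
proof -
  have "sum (adj_row E Y) T \<noteq> 0 \<longleftrightarrow> (\<exists>u\<in>Y. odd (card {v\<in>T. E v u}))" if "T \<subseteq> S" for T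
    using sum_adj_row_eq_0_iff[OF finite_subset[OF that assms]] by blast
  then show ?thesis
    unfolding gf2_indep_def gf2_independent_image_iff[OF assms, symmetric] by blast
qed

lemma gf2_rank_eq_dim:
  assumes "finite X"
  shows "gf2_rank E X Y = gf2.dim (adj_row E Y ` X)"
  unfolding gf2_rank_def
proof (rule Max_eqI)
  show "finite {card S |S. S \<subseteq> X \<and> gf2_indep E Y S}"
    by (rule finite_subset[of _ "card ` Pow X"]) (use assms in auto)
next
  fix k assume "k \<in> {card S |S. S \<subseteq> X \<and> gf2_indep E Y S}"
  then obtain S where S: "k = card S" "S \<subseteq> X" "gf2_indep E Y S" by blast
  have "finite S" using S(2) assms finite_subset by blast
  then have "inj_on (adj_row E Y) S" "gf2.independent (adj_row E Y ` S)"
    using S(3) gf2_indep_iff by blast+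
  then have "card S = gf2.dim (adj_row E Y ` S)"
    by (simp add: gf2.dim_eq_card_independent card_image)
  also have "\<dots> \<le> gf2.dim (adj_row E Y ` X)"
    using S(2) assms by (intro gf2_dim_subset) auto
  finally show "k \<le> gf2.dim (adj_row E Y ` X)" using S(1) by simp
next
  obtain B where B: "B \<subseteq> adj_row E Y ` X" "gf2.independent B"
      "adj_row E Y ` X \<subseteq> gf2.span B" "card B = gf2.dim (adj_row E Y ` X)"
    by (rule gf2.basis_exists)
  then obtain S where S: "S \<subseteq> X" "inj_on (adj_row E Y) S" "B = adj_row E Y ` S"
    using subset_image_inj by metis
  have "gf2_indep E Y S"
    using S B(2) gf2_indep_iff finite_subset[OF S(1) assms] by blast
  moreover have "card S = gf2.dim (adj_row E Y ` X)"
    using S B(4) by (simp add: card_image)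
  ultimately show "gf2.dim (adj_row E Y ` X) \<in> {card S |S. S \<subseteq> X \<and> gf2_indep E Y S}"
    using S(1) by (intro CollectI exI[of _ S]) auto
qed

(* Expanding the rows of X in a basis B of their span writes every column as a
   combination of the |B| coordinate vectors of that expansion. *)
lemma gf2_dim_adj_rows_transpose_le:
  assumes "finite X" and sym: "\<And>a b. a \<in> X \<Longrightarrow> b \<in> Y \<Longrightarrow> E a b = E b a"
  shows "gf2.dim (adj_row E X ` Y) \<le> gf2.dim (adj_row E Y ` X)"
proof -
  obtain B where B: "B \<subseteq> adj_row E Y ` X" "adj_row E Y ` X \<subseteq> gf2.span B"
      "card B = gf2.dim (adj_row E Y ` X)"
    by (meson gf2.basis_exists)
  have "finite B" using B(1) assms(1) finite_surj by blast
  then have "\<forall>v\<in>X. \<exists>c. adj_row E Y v = (\<Sum>b\<in>B. gf2_scale (c b) b)"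
    using B(2) gf2.span_finite by auto
  then obtain c where c: "\<forall>v\<in>X. adj_row E Y v = (\<Sum>b\<in>B. gf2_scale (c v b) b)"
    by (rule bchoice[THEN exE])
  define coord where "coord b = (\<lambda>v. if v \<in> X then c v b else 0)" for b
  have col: "adj_row E X u = (\<Sum>b\<in>B. gf2_scale (b u) (coord b))" if "u \<in> Y" for u
  proof
    fix v show "adj_row E X u v = (\<Sum>b\<in>B. gf2_scale (b u) (coord b)) v"
    proof (cases "v \<in> X")
      case True
      then have "adj_row E X u v = adj_row E Y v u" using that sym by (simp add: adj_row_def)
      also have "\<dots> = (\<Sum>b\<in>B. c v b * b u)" using c True by (simp add: sum_apply)
      finally show ?thesis using True by (simp add: sum_apply coord_def mult.commute)
    next
      case False
      then show ?thesis by (simp add: adj_row_def coord_def sum_apply)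
    qed
  qed
  have "adj_row E X u \<in> gf2.span (coord ` B)" if "u \<in> Y" for u
    unfolding col[OF that] by (intro gf2.span_sum gf2.span_scale gf2.span_base imageI)
  then have "adj_row E X ` Y \<subseteq> gf2.span (coord ` B)" by blast
  then have "gf2.dim (adj_row E X ` Y) \<le> card (coord ` B)"
    using \<open>finite B\<close> by (simp add: gf2.dim_le_card)
  also have "\<dots> \<le> card B" using \<open>finite B\<close> by (rule card_image_le)
  finally show ?thesis using B(3) by simp
qed

lemma cut_rank_eq_dim:
  "X \<subseteq> {1..n} \<Longrightarrow> cut_rank n E X = gf2.dim (adj_row E ({1..n} - X) ` X)"
  unfolding cut_rank_def by (rule gf2_rank_eq_dim) (auto intro: finite_subset)

lemma cut_rank_le_card:
  assumes "X \<subseteq> {1..n}"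
  shows "cut_rank n E X \<le> card X"
proof -
  have "finite X" using assms by (rule finite_subset) simp
  then have "gf2.dim (adj_row E ({1..n} - X) ` X) \<le> card (adj_row E ({1..n} - X) ` X)"
    by (simp add: gf2.dim_le_card')
  also have "\<dots> \<le> card X" using \<open>finite X\<close> by (rule card_image_le)
  finally show ?thesis unfolding cut_rank_eq_dim[OF assms] .
qed

lemma cut_rank_compl:
  assumes "is_graph n E" "X \<subseteq> {1..n}"
  shows "cut_rank n E ({1..n} - X) = cut_rank n E X"
proof -
  have sym: "E a b = E b a" if "a \<in> {1..n}" "b \<in> {1..n}" for a b
    using assms(1) that unfolding is_graph_def by blast
  have "{1..n} - ({1..n} - X) = X" using assms(2) by blast
  then have "cut_rank n E ({1..n} - X) = gf2.dim (adj_row E X ` ({1..n} - X))"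
    by (simp add: cut_rank_eq_dim)
  also have "\<dots> = gf2.dim (adj_row E ({1..n} - X) ` X)"
    using assms(2) sym
    by (intro antisym gf2_dim_adj_rows_transpose_le) (auto intro: finite_subset)
  also have "\<dots> = cut_rank n E X"
    by (rule cut_rank_eq_dim[symmetric, OF assms(2)])
  finally show ?thesis .
qed

lemma cut_rank_le_card_compl:
  assumes "is_graph n E" "X \<subseteq> {1..n}"
  shows "cut_rank n E X \<le> card ({1..n} - X)"
proof -
  have "cut_rank n E X = cut_rank n E ({1..n} - X)" using cut_rank_compl[OF assms] by simp
  also have "\<dots> \<le> card ({1..n} - X)" by (rule cut_rank_le_card) blast
  finally show ?thesis .
qed

section \<open>Submodularity of the cut-rank\<close>

lemma (in vector_space) span_image_Un_eq:
  assumes "\<And>x. x \<in> X \<Longrightarrow> f x - g x \<in> span U"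
  shows "span (f ` X \<union> U) = span (g ` X \<union> U)"
proof -
  have sub: "f ` X \<union> U \<subseteq> span (g ` X \<union> U)"
    if "\<And>x. x \<in> X \<Longrightarrow> f x - g x \<in> span U" for f g
  proof -
    have "f x \<in> span (g ` X \<union> U)" if "x \<in> X" for x
    proof -
      have "g x \<in> span (g ` X \<union> U)" using \<open>x \<in> X\<close> by (intro span_base) blast
      moreover have "f x - g x \<in> span (g ` X \<union> U)"
        using \<open>x \<in> X\<close> span_mono[of U "g ` X \<union> U"] \<open>\<And>x. x \<in> X \<Longrightarrow> f x - g x \<in> span U\<close>
        by blast
      ultimately have "g x + (f x - g x) \<in> span (g ` X \<union> U)" by (rule span_add)
      then show ?thesis by simp
    qed
    then show ?thesis using span_superset by blast
  qed
  have "g x - f x \<in> span U" if "x \<in> X" for x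
    using span_neg[OF assms[OF that]] by simp
  then show ?thesis
    unfolding span_eq using sub assms by blast
qed

lemma gf2_dim_Un_Int_le:
  assumes "finite A" "finite B"
  shows "gf2.dim (A \<union> B) + gf2.dim (A \<inter> B) \<le> gf2.dim A + gf2.dim B"
proof -
  obtain I where I: "I \<subseteq> A \<inter> B" "gf2.independent I" "card I = gf2.dim (A \<inter> B)"
    by (meson gf2.basis_exists)
  obtain BA where BA: "I \<subseteq> BA" "BA \<subseteq> A" "gf2.independent BA" "A \<subseteq> gf2.span BA"
    using gf2.maximal_independent_subset_extend[of I A] I by blast
  obtain BB where BB: "I \<subseteq> BB" "BB \<subseteq> B" "gf2.independent BB" "B \<subseteq> gf2.span BB"
    using gf2.maximal_independent_subset_extend[of I B] I by blast
  have fin: "finite BA" "finite BB" using BA(2) BB(2) assms finite_subset by blast+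
  have "A \<union> B \<subseteq> gf2.span (BA \<union> BB)"
    using BA(4) BB(4) gf2.span_mono[of BA "BA \<union> BB"] gf2.span_mono[of BB "BA \<union> BB"] by blast
  then have "gf2.dim (A \<union> B) \<le> card (BA \<union> BB)"
    using gf2.dim_le_card fin by blast
  moreover have "card (BA \<union> BB) + card (BA \<inter> BB) = card BA + card BB"
    using card_Un_Int[OF fin] by simp
  moreover have "card I \<le> card (BA \<inter> BB)"
    using card_mono[of "BA \<inter> BB" I] fin BA(1) BB(1) by blast
  moreover have "card BA = gf2.dim A" "card BB = gf2.dim B"
    using gf2.basis_card_eq_dim BA(2-4) BB(2-4) by blast+
  ultimately show ?thesis using I(3) by linarith
qed

definition unit_vec :: "nat \<Rightarrow> nat \<Rightarrow> bit" where
  "unit_vec c = (\<lambda>u. of_bool (u = c))"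

lemma inj_unit_vec: "inj unit_vec"
  by (rule injI) (metis unit_vec_def of_bool_eq_iff)

lemma gf2_independent_unit_vecs: "gf2.independent (unit_vec ` C)"
  unfolding gf2.independent_explicit_module
proof (intro allI impI)
  fix t c w
  assume t: "finite t" "t \<subseteq> unit_vec ` C" and s: "(\<Sum>v\<in>t. gf2_scale (c v) v) = 0"
    and w: "w \<in> t"
  obtain i where i: "w = unit_vec i" using t(2) w by blast
  have at_i: "v i = of_bool (v = w)" if "v \<in> t" for v
    using that t(2) i inj_unit_vec by (auto simp: unit_vec_def dest: injD)
  have "(\<Sum>v\<in>t. gf2_scale (c v) v) i = (\<Sum>v\<in>t. if v = w then c v else 0)"
    unfolding sum_apply gf2_scale_apply by (intro sum.cong refl) (simp add: at_i)
  also have "\<dots> = c w" using t(1) w by simp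
  finally have "(\<Sum>v\<in>t. gf2_scale (c v) v) i = c w" .
  then show "c w = 0" using s by simp
qed

lemma gf2_independent_Un_separated:
  assumes "gf2.independent A" "gf2.independent B"
    and A: "\<And>a u. a \<in> A \<Longrightarrow> u \<notin> Y \<Longrightarrow> a u = 0"
    and B: "\<And>b u. b \<in> B \<Longrightarrow> u \<in> Y \<Longrightarrow> b u = 0"
  shows "gf2.independent (A \<union> B)"
  unfolding gf2.independent_explicit_module
proof (intro allI impI)
  fix t c w
  assume t: "finite t" "t \<subseteq> A \<union> B" and s: "(\<Sum>v\<in>t. gf2_scale (c v) v) = 0"
    and w: "w \<in> t"
  define sA where "sA = (\<Sum>v\<in>t \<inter> A. gf2_scale (c v) v)"
  define sB where "sB = (\<Sum>v\<in>t - A. gf2_scale (c v) v)"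
  have "sA + sB = 0"
    using s sum.Int_Diff[OF t(1), of _ A] unfolding sA_def sB_def by metis
  moreover have "sA u = 0" if "u \<notin> Y" for u
  proof -
    have "v u = 0" if "v \<in> t \<inter> A" for v using A \<open>u \<notin> Y\<close> that by blast
    then show ?thesis unfolding sA_def sum_apply by (simp add: sum.neutral)
  qed
  moreover have "sB u = 0" if "u \<in> Y" for u
  proof -
    have "v u = 0" if "v \<in> t - A" for v using B \<open>u \<in> Y\<close> t(2) that by blast
    then show ?thesis unfolding sB_def sum_apply by (simp add: sum.neutral)
  qed
  ultimately have "sA u = 0" "sB u = 0" for u
    by (metis add.right_neutral add.left_neutral plus_fun_apply zero_fun_apply)+
  then have "sA = 0" "sB = 0" by auto
  then show "c w = 0"
    using w t gf2.independentD[OF assms(1), of "t \<inter> A" c w] gf2.independentD[OF assms(2), of "t - A" c w]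
    unfolding sA_def sB_def by blast
qed

lemma gf2_dim_Un_unit_vecs:
  assumes "finite R" "finite C" and vanish: "\<And>f u. f \<in> R \<Longrightarrow> u \<in> C \<Longrightarrow> f u = 0"
  shows "gf2.dim (R \<union> unit_vec ` C) = gf2.dim R + card C"
proof -
  obtain B where B: "B \<subseteq> R" "gf2.independent B" "R \<subseteq> gf2.span B" "card B = gf2.dim R"
    by (rule gf2.basis_exists)
  have ind: "gf2.independent (unit_vec ` C \<union> B)"
  proof (rule gf2_independent_Un_separated[OF gf2_independent_unit_vecs B(2), where Y = C])
    show "a u = 0" if "a \<in> unit_vec ` C" "u \<notin> C" for a u
      using that by (auto simp: unit_vec_def)
    show "b u = 0" if "b \<in> B" "u \<in> C" for b u
      using that B(1) vanish by blast
  qed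
  have "B \<inter> unit_vec ` C = {}"
  proof (intro equals0I)
    fix b assume "b \<in> B \<inter> unit_vec ` C"
    then obtain i where "b \<in> R" "i \<in> C" "b = unit_vec i" using B(1) by blast
    then show False using vanish[of b i] by (simp add: unit_vec_def)
  qed
  then have "card (unit_vec ` C \<union> B) = card C + card B"
    using B(1) assms(1,2) finite_subset card_image[OF inj_on_subset[OF inj_unit_vec]]
    by (subst card_Un_disjoint) auto
  moreover have "R \<union> unit_vec ` C \<subseteq> gf2.span (unit_vec ` C \<union> B)"
    using B(3) gf2.span_mono[of B "unit_vec ` C \<union> B"] gf2.span_superset by blast
  then have "card (unit_vec ` C \<union> B) = gf2.dim (R \<union> unit_vec ` C)"
    using B(1) by (intro gf2.basis_card_eq_dim ind) blast+
  ultimately show ?thesis using B(4) by simp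
qed

lemma gf2_dim_adj_rows_Un_unit_vecs:
  assumes "finite V" "X \<subseteq> V" "Y \<subseteq> V"
  shows "gf2.dim (adj_row E V ` X \<union> unit_vec ` (V - Y)) = gf2.dim (adj_row E Y ` X) + card (V - Y)"
proof -
  let ?U = "unit_vec ` (V - Y)"
  have diff: "adj_row E V v - adj_row E Y v
      = (\<Sum>c\<in>V - Y. gf2_scale (of_bool (E v c)) (unit_vec c))" for v
  proof
    fix u
    have "(\<Sum>c\<in>V - Y. gf2_scale (of_bool (E v c)) (unit_vec c)) u
        = (\<Sum>c\<in>V - Y. if c = u then of_bool (E v u) else 0)"
      unfolding sum_apply by (intro sum.cong refl) (auto simp: unit_vec_def)
    also have "\<dots> = of_bool (u \<in> V - Y \<and> E v u)" using assms(1) by simp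
    also have "\<dots> = (adj_row E V v - adj_row E Y v) u"
      using assms(3) by (auto simp: adj_row_def add_bit_eq_xor)
    finally show "(adj_row E V v - adj_row E Y v) u
        = (\<Sum>c\<in>V - Y. gf2_scale (of_bool (E v c)) (unit_vec c)) u" ..
  qed
  have "adj_row E V v - adj_row E Y v \<in> gf2.span ?U" for v
    unfolding diff by (intro gf2.span_sum gf2.span_scale gf2.span_base imageI)
  then have "gf2.span (adj_row E V ` X \<union> ?U) = gf2.span (adj_row E Y ` X \<union> ?U)"
    by (rule gf2.span_image_Un_eq)
  then have "gf2.dim (adj_row E V ` X \<union> ?U) = gf2.dim (adj_row E Y ` X \<union> ?U)"
    by (rule gf2.span_eq_dim)
  also have "\<dots> = gf2.dim (adj_row E Y ` X) + card (V - Y)"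
    using assms by (intro gf2_dim_Un_unit_vecs) (auto simp: adj_row_def intro: finite_subset)
  finally show ?thesis .
qed

lemma gf2_dim_adj_rows_submodular:
  assumes "finite V" "X1 \<subseteq> V" "X2 \<subseteq> V" "Y1 \<subseteq> V" "Y2 \<subseteq> V"
  shows "gf2.dim (adj_row E (Y1 \<union> Y2) ` (X1 \<inter> X2)) + gf2.dim (adj_row E (Y1 \<inter> Y2) ` (X1 \<union> X2))
     \<le> gf2.dim (adj_row E Y1 ` X1) + gf2.dim (adj_row E Y2 ` X2)"
proof -
  \<comment> \<open>Padding the full rows of X with the unit vectors outside Y shifts the rank by
    |V - Y| and makes the sets monotone in X and antitone in Y, so submodularity of the
    dimension of finite sets transfers to the rank.\<close>
  define Z where "Z X Y = adj_row E V ` X \<union> unit_vec ` (V - Y)" for X Y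
  have dim_Z: "gf2.dim (Z X Y) = gf2.dim (adj_row E Y ` X) + card (V - Y)"
    if "X \<subseteq> V" "Y \<subseteq> V" for X Y
    unfolding Z_def using assms(1) that by (rule gf2_dim_adj_rows_Un_unit_vecs)
  have fin_Z: "finite (Z X Y)" if "X \<subseteq> V" for X Y
    unfolding Z_def using assms(1) that finite_subset by auto
  have "gf2.dim (Z (X1 \<inter> X2) (Y1 \<union> Y2)) \<le> gf2.dim (Z X1 Y1 \<inter> Z X2 Y2)"
    using fin_Z[OF assms(2)] by (intro gf2_dim_subset) (auto simp: Z_def)
  moreover have "Z (X1 \<union> X2) (Y1 \<inter> Y2) = Z X1 Y1 \<union> Z X2 Y2"
    unfolding Z_def by blast
  moreover have "gf2.dim (Z X1 Y1 \<union> Z X2 Y2) + gf2.dim (Z X1 Y1 \<inter> Z X2 Y2)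
      \<le> gf2.dim (Z X1 Y1) + gf2.dim (Z X2 Y2)"
    using fin_Z assms(2,3) by (intro gf2_dim_Un_Int_le)
  moreover have "card (V - (Y1 \<union> Y2)) + card (V - (Y1 \<inter> Y2)) = card (V - Y1) + card (V - Y2)"
    using card_Un_Int[of "V - Y1" "V - Y2"] assms(1) by (simp add: Diff_Int Diff_Un)
  ultimately show ?thesis
    using assms dim_Z[of "X1 \<inter> X2" "Y1 \<union> Y2"] dim_Z[of "X1 \<union> X2" "Y1 \<inter> Y2"]
      dim_Z[of X1 Y1] dim_Z[of X2 Y2]
    by (simp add: le_infI1 le_supI)
qed

lemma cut_rank_submodular:
  assumes "A \<subseteq> {1..n}" "B \<subseteq> {1..n}"
  shows "cut_rank n E (A \<inter> B) + cut_rank n E (A \<union> B) \<le> cut_rank n E A + cut_rank n E B"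
proof -
  have compl_Int: "{1..n} - (A \<inter> B) = ({1..n} - A) \<union> ({1..n} - B)"
    and compl_Un: "{1..n} - (A \<union> B) = ({1..n} - A) \<inter> ({1..n} - B)" by blast+
  have Int: "A \<inter> B \<subseteq> {1..n}" and Un: "A \<union> B \<subseteq> {1..n}" using assms by blast+
  show ?thesis
    unfolding assms[THEN cut_rank_eq_dim] Int[THEN cut_rank_eq_dim] Un[THEN cut_rank_eq_dim]
      compl_Int compl_Un
    by (rule gf2_dim_adj_rows_submodular[where V = "{1..n}"]) (use assms in auto)
qed

lemma cut_rank_Un_le:
  assumes G: "is_graph n E" "rank_connected r n E"
    and A: "A \<subseteq> {1..n}" "cut_rank n E A \<le> r" and B: "B \<subseteq> {1..n}" "cut_rank n E B \<le> r"
    and "r \<le> card (A \<inter> B)"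
  shows "cut_rank n E (A \<union> B) \<le> r"
proof (cases "r \<le> cut_rank n E (A \<inter> B)")
  case True
  then show ?thesis using cut_rank_submodular[OF A(1) B(1), of E] A(2) B(2) by linarith
next
  case False
  moreover have "A \<inter> B \<subseteq> {1..n}" using A(1) by blast
  ultimately have "trivial_split n E (A \<inter> B)"
    using G(2) unfolding rank_connected_def by (meson not_le order_refl)
  then have "cut_rank n E (A \<inter> B) = card ({1..n} - (A \<inter> B))"
    using False \<open>r \<le> card (A \<inter> B)\<close> unfolding trivial_split_def by linarith
  moreover have "card ({1..n} - (A \<union> B)) \<le> card ({1..n} - (A \<inter> B))"
    by (rule card_mono) auto
  moreover have "cut_rank n E (A \<union> B) \<le> card ({1..n} - (A \<union> B))"
    using A(1) B(1) by (intro cut_rank_le_card_compl G(1)) blast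
  ultimately show ?thesis using False by linarith
qed

lemma splits_hypergraph_in_K_class:
  assumes "is_graph n E" "rank_connected r n E"
  shows "splits_hypergraph r n E \<in> K_class r n"
  unfolding K_class_def
proof (intro CollectI conjI allI ballI impI)
  show "splits_hypergraph r n E \<subseteq> Pow {1..n}"
    unfolding splits_hypergraph_def by blast
  show "X \<in> splits_hypergraph r n E" if "X \<subseteq> {1..n}" "card X \<le> r" for X
    using cut_rank_le_card[OF that(1), of E] that unfolding splits_hypergraph_def by simp
  show "{1..n} - A \<in> splits_hypergraph r n E" if "A \<in> splits_hypergraph r n E" for A
    using that cut_rank_compl[OF assms(1)] unfolding splits_hypergraph_def by auto
  show "A \<union> B \<in> splits_hypergraph r n E"
    if "A \<in> splits_hypergraph r n E" "B \<in> splits_hypergraph r n E" "r \<le> card (A \<inter> B)" for A B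
    using that cut_rank_Un_le[OF assms] unfolding splits_hypergraph_def by auto
qed

section \<open>Generating the members of K_r(n)\<close>

lemma K_class_mem_subset: "F \<in> K_class r n \<Longrightarrow> X \<in> F \<Longrightarrow> X \<subseteq> {1..n}"
  unfolding K_class_def by blast

lemma K_class_small: "F \<in> K_class r n \<Longrightarrow> X \<subseteq> {1..n} \<Longrightarrow> card X \<le> r \<Longrightarrow> X \<in> F"
  unfolding K_class_def by blast

lemma K_class_compl: "F \<in> K_class r n \<Longrightarrow> X \<in> F \<Longrightarrow> {1..n} - X \<in> F"
  unfolding K_class_def by blast

lemma K_class_Un: "F \<in> K_class r n \<Longrightarrow> A \<in> F \<Longrightarrow> B \<in> F \<Longrightarrow> r \<le> card (A \<inter> B) \<Longrightarrow> A \<union> B \<in> F"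
  unfolding K_class_def by blast

lemma K_class_Int:
  assumes F: "F \<in> K_class r n" and "A \<in> F" "B \<in> F" "r \<le> card ({1..n} - (A \<union> B))"
  shows "A \<inter> B \<in> F"
proof -
  have "({1..n} - A) \<inter> ({1..n} - B) = {1..n} - (A \<union> B)" by blast
  then have "({1..n} - A) \<union> ({1..n} - B) \<in> F"
    using assms by (intro K_class_Un[OF F] K_class_compl[OF F]) simp_all
  then have "{1..n} - (({1..n} - A) \<union> ({1..n} - B)) \<in> F" by (rule K_class_compl[OF F])
  moreover have "{1..n} - (({1..n} - A) \<union> ({1..n} - B)) = A \<inter> B"
    using K_class_mem_subset[OF F] assms(2,3) by blast
  ultimately show ?thesis by simp
qed

lemma K_class_Union:
  assumes F: "F \<in> K_class r n" and "finite \<Y>" "\<Y> \<noteq> {}" "\<Y> \<subseteq> F"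
    and common: "\<And>Y. Y \<in> \<Y> \<Longrightarrow> S \<subseteq> Y" and "r \<le> card S"
  shows "\<Union>\<Y> \<in> F"
  using assms(2-4) common
proof (induction \<Y> rule: finite_ne_induct)
  case (singleton Y)
  then show ?case by simp
next
  case (insert A \<Y>)
  then have "A \<in> F" "\<Union>\<Y> \<in> F" "S \<subseteq> A \<inter> \<Union>\<Y>" by auto
  moreover have "finite (A \<inter> \<Union>\<Y>)"
    using K_class_mem_subset[OF F \<open>A \<in> F\<close>] by (meson finite_Int finite_atLeastAtMost finite_subset)
  ultimately have "r \<le> card (A \<inter> \<Union>\<Y>)"
    using \<open>r \<le> card S\<close> card_mono le_trans by blast
  then show ?case using K_class_Un[OF F \<open>A \<in> F\<close> \<open>\<Union>\<Y> \<in> F\<close>] by simp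
qed

definition minimal_superset :: "'a set set \<Rightarrow> 'a set \<Rightarrow> 'a set \<Rightarrow> bool" where
  "minimal_superset F R X \<longleftrightarrow> R \<subseteq> X \<and> (\<forall>Y\<in>F. R \<subseteq> Y \<and> Y \<subseteq> X \<longrightarrow> Y = X)"

lemma Union_proper_subsets_if_not_minimal_superset:
  assumes "finite X" "r < card X"
    and not_minimal: "\<nexists>R. card R = Suc r \<and> minimal_superset F R X"
  obtains S \<Y> where "card S = r" "finite \<Y>" "\<Y> \<noteq> {}" "\<Y> \<subseteq> F"
    "\<And>Y. Y \<in> \<Y> \<Longrightarrow> S \<subseteq> Y \<and> Y \<subset> X" "\<Union>\<Y> = X"
proof -
  obtain S where S: "S \<subseteq> X" "card S = r"
    using obtain_subset_with_card_n[of r X] assms(2) by auto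
  have "\<exists>Y\<in>F. insert v S \<subseteq> Y \<and> Y \<subset> X" if "v \<in> X - S" for v
  proof -
    have "card (insert v S) = Suc r"
      using that S assms(1) finite_subset by (metis DiffE card_insert_disjoint)
    then have "\<not> minimal_superset F (insert v S) X" using not_minimal by blast
    moreover have "insert v S \<subseteq> X" using that S by blast
    ultimately show ?thesis unfolding minimal_superset_def by auto
  qed
  then have "\<forall>v\<in>X - S. \<exists>Y. Y \<in> F \<and> insert v S \<subseteq> Y \<and> Y \<subset> X" by blast
  then obtain Yf where Yf: "\<forall>v\<in>X - S. Yf v \<in> F \<and> insert v S \<subseteq> Yf v \<and> Yf v \<subset> X"
    by (rule bchoice[THEN exE])
  have "S \<noteq> X" using S(2) assms(2) by auto
  then have "X - S \<noteq> {}" using S(1) by blast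
  moreover have "\<Union>(Yf ` (X - S)) = X"
  proof
    show "\<Union>(Yf ` (X - S)) \<subseteq> X" using Yf by blast
    show "X \<subseteq> \<Union>(Yf ` (X - S))"
    proof
      fix x assume "x \<in> X"
      obtain v where "v \<in> X - S" using \<open>X - S \<noteq> {}\<close> by blast
      then show "x \<in> \<Union>(Yf ` (X - S))"
        using Yf \<open>x \<in> X\<close> by (cases "x \<in> S") blast+
    qed
  qed
  ultimately show ?thesis
    using that[of S "Yf ` (X - S)"] S(2) Yf assms(1) by blast
qed

definition K_generators :: "nat \<Rightarrow> nat \<Rightarrow> nat set set \<Rightarrow> nat set set" where
  "K_generators r n F =
     {X \<in> F. 2 * card X \<le> n \<and> (\<exists>R. card R = Suc r \<and> minimal_superset F R X)}"

lemma minimal_superset_unique: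
  assumes F: "F \<in> K_class r n" and X: "X1 \<in> F" "X2 \<in> F" "2 * card X1 \<le> n" "2 * card X2 \<le> n"
    and R: "card R = Suc r" "minimal_superset F R X1" "minimal_superset F R X2"
  shows "X1 = X2"
proof -
  have sub: "X1 \<subseteq> {1..n}" "X2 \<subseteq> {1..n}" using K_class_mem_subset[OF F] X(1,2) by blast+
  then have fin: "finite X1" "finite X2" using finite_subset by blast+
  have "R \<subseteq> X1 \<inter> X2" using R(2,3) unfolding minimal_superset_def by blast
  then have "Suc r \<le> card (X1 \<inter> X2)" using R(1) fin by (metis card_mono finite_Int)
  moreover have "card (X1 \<union> X2) + card (X1 \<inter> X2) = card X1 + card X2"
    using card_Un_Int[OF fin] by simp
  moreover have "card ({1..n} - (X1 \<union> X2)) = n - card (X1 \<union> X2)"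
    using sub by (subst card_Diff_subset) (auto intro: finite_subset)
  ultimately have "r \<le> card ({1..n} - (X1 \<union> X2))" using X(3,4) by linarith
  then have "X1 \<inter> X2 \<in> F" using K_class_Int[OF F X(1,2)] by blast
  then show ?thesis
    using \<open>R \<subseteq> X1 \<inter> X2\<close> R(2,3) unfolding minimal_superset_def by blast
qed

lemma binomial_le_power: "n choose k \<le> n ^ k"
proof -
  have "n choose k \<le> (n choose k) * fact k"
    using mult_le_mono2[OF fact_ge_1, of "n choose k" k] by simp
  also have "\<dots> \<le> n ^ k" by (rule binomial_fact_pow)
  finally show ?thesis .
qed

lemma card_K_generators_le:
  assumes F: "F \<in> K_class r n"
  shows "card (K_generators r n F) \<le> n choose Suc r"
proof -
  have "\<forall>X\<in>K_generators r n F. \<exists>R. card R = Suc r \<and> minimal_superset F R X"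
    unfolding K_generators_def by blast
  then obtain f where f: "\<forall>X\<in>K_generators r n F. card (f X) = Suc r \<and> minimal_superset F (f X) X"
    by (rule bchoice[THEN exE])
  have "inj_on f (K_generators r n F)"
  proof (rule inj_onI)
    fix X1 X2
    assume X: "X1 \<in> K_generators r n F" "X2 \<in> K_generators r n F" and "f X1 = f X2"
    then have R: "card (f X1) = Suc r" "minimal_superset F (f X1) X1" "minimal_superset F (f X1) X2"
      using f by metis+
    have "X1 \<in> F" "X2 \<in> F" "2 * card X1 \<le> n" "2 * card X2 \<le> n"
      using X unfolding K_generators_def by blast+
    then show "X1 = X2" by (rule minimal_superset_unique[OF F _ _ _ _ R])
  qed
  moreover have "f X \<in> {R. R \<subseteq> {1..n} \<and> card R = Suc r}" if "X \<in> K_generators r n F" for X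
  proof -
    have "f X \<subseteq> X" "card (f X) = Suc r" using f that unfolding minimal_superset_def by auto
    moreover have "X \<subseteq> {1..n}" using that K_class_mem_subset[OF F] unfolding K_generators_def by blast
    ultimately show ?thesis by blast
  qed
  then have "f ` K_generators r n F \<subseteq> {R. R \<subseteq> {1..n} \<and> card R = Suc r}" by blast
  ultimately have "card (K_generators r n F) \<le> card {R. R \<subseteq> {1..n} \<and> card R = Suc r}"
    by (intro card_inj_on_le) simp_all
  also have "\<dots> = n choose Suc r" using n_subsets[of "{1..n}" "Suc r"] by simp
  finally show ?thesis .
qed

lemma K_class_subset_if_generators_subset:
  assumes F: "F \<in> K_class r n" and K: "K \<in> K_class r n" and gen: "K_generators r n F \<subseteq> K"
  shows "F \<subseteq> K"
proof
  fix X assume "X \<in> F"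
  then show "X \<in> K"
  proof (induction "card X" arbitrary: X rule: less_induct)
    case less
    have X: "X \<subseteq> {1..n}" "finite X" using K_class_mem_subset[OF F less.prems] finite_subset by auto
    consider "card X \<le> r" | "n < 2 * card X" | "X \<in> K_generators r n F"
      | "r < card X" "\<nexists>R. card R = Suc r \<and> minimal_superset F R X"
      using less.prems unfolding K_generators_def by force
    then show ?case
    proof cases
      case 1
      then show ?thesis using K_class_small[OF K X(1)] by simp
    next
      case 2
      have "card ({1..n} - X) < card X" using card_Diff_subset[OF X(2,1)] 2 by simp
      then have "{1..n} - X \<in> K" using less.hyps K_class_compl[OF F less.prems] by blast
      then have "{1..n} - ({1..n} - X) \<in> K" by (rule K_class_compl[OF K])
      then show ?thesis using X(1) by (simp add: double_diff)
    next
      case 3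
      then show ?thesis using gen by blast
    next
      case 4
      obtain S \<Y> where S: "card S = r" and \<Y>: "finite \<Y>" "\<Y> \<noteq> {}" "\<Y> \<subseteq> F"
          and proper: "\<And>Y. Y \<in> \<Y> \<Longrightarrow> S \<subseteq> Y \<and> Y \<subset> X" and X_eq: "\<Union>\<Y> = X"
        using Union_proper_subsets_if_not_minimal_superset[OF X(2) 4] by blast
      have "\<Y> \<subseteq> K"
      proof
        fix Y assume "Y \<in> \<Y>"
        then have "card Y < card X" using proper X(2) psubset_card_mono by blast
        then show "Y \<in> K" using less.hyps \<open>Y \<in> \<Y>\<close> \<Y>(3) by blast
      qed
      then have "\<Union>\<Y> \<in> K"
        by (rule K_class_Union[OF K \<Y>(1,2), where S = S]) (use proper S in auto)
      then show ?thesis using X_eq by simp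
    qed
  qed
qed

lemma cl_K_generators:
  assumes F: "F \<in> K_class r n"
  shows "cl r n (K_generators r n F) = F"
proof
  show "cl r n (K_generators r n F) \<subseteq> F"
    unfolding cl_def using F by (intro Inter_lower) (auto simp: K_generators_def)
  show "F \<subseteq> cl r n (K_generators r n F)"
    unfolding cl_def using K_class_subset_if_generators_subset[OF F] by blast
qed

theorem theorem1:
  fixes r :: nat
  shows "\<exists>C::real. C > 0 \<and>
    (\<forall>n (E :: nat \<Rightarrow> nat \<Rightarrow> bool). is_graph n E \<and> rank_connected r n E \<longrightarrow>
       (\<exists>H. H \<subseteq> Pow {1..n} \<and> real (card H) \<le> C * real n ^ (r + 1) \<and>
            cl r n H = splits_hypergraph r n E))"
proof (intro exI[of _ 1] conjI allI impI)
  fix n E assume "is_graph n E \<and> rank_connected r n E"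
  then have F: "splits_hypergraph r n E \<in> K_class r n"
    by (blast intro: splits_hypergraph_in_K_class)
  let ?H = "K_generators r n (splits_hypergraph r n E)"
  have "card ?H \<le> n ^ (r + 1)"
    using card_K_generators_le[OF F] binomial_le_power[of n "Suc r"] by simp
  then have "real (card ?H) \<le> 1 * real n ^ (r + 1)"
    unfolding mult_1 of_nat_power[symmetric] of_nat_le_iff .
  moreover have "?H \<subseteq> Pow {1..n}"
    using K_class_mem_subset[OF F] unfolding K_generators_def by blast
  ultimately show "\<exists>H. H \<subseteq> Pow {1..n} \<and> real (card H) \<le> 1 * real n ^ (r + 1) \<and>
      cl r n H = splits_hypergraph r n E"
    using cl_K_generators[OF F] by blast
qed simp

end
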